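(* Let $N\ge 1$ and let $\nu$ be a nonzero finite positive Borel measure on the unit circle $\mathbb T=\{z\in\mathbb C:|z|=1\}$. Put $m_k=\int_{\mathbb T} z^k\,d\nu(z)$ for $k=0,1,\dots,N$. Then there exists a unique $r\in[0,1]$ for which there exist an integer $1\le n\le N$, weights $\rho_1,\dots,\rho_n>0$ and angles $\phi_1,\dots,\phi_n\in[-\pi,\pi)$ satisfying $$m_k=r^k\sum_{\alpha=1}^n\rho_\alpha e^{ik\phi_\alpha},\qquad k=0,1,\dots,N$$ (with the convention $r^0=1$; equivalently one may use $N$ nodes with the surplus weights equal to zero). Moreover, for this $r$ the quantity $$\hat m_{N+1}=r^{N+1}\sum_{\alpha=1}^n\rho_\alpha e^{i(N+1)\phi_\alpha}$$ (and likewise any other quantity computed from the ansatz $f_N(\theta)=\sum_\alpha\rho_\alpha P_r(\phi_\alpha-\theta)$) is uniquely determined by $(m_0,\dots,m_N)$.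
   Context: For $0\le r<1$ the Poisson kernel is $P_r(\theta)=\frac{1}{2\pi}\frac{1-r^2}{1-2r\cos\theta+r^2}=\frac1{2\pi}\sum_{k\in\mathbb Z}r^{|k|}e^{ik\theta}$; it satisfies $\int_{-\pi}^{\pi}e^{ik\theta}P_r(\phi-\theta)\,d\theta=r^ke^{ik\phi}$ for $k\ge0$, and as $r\to1$ it tends to the Dirac mass at $0$ (so for $r=1$ the ansatz is the atomic measure $\sum_\alpha\rho_\alpha\delta_{\phi_\alpha}$). *)

theory Defs
  imports "HOL-Analysis.Analysis"
begin

definition circle_moment :: "complex measure \<Rightarrow> nat \<Rightarrow> complex" where
  "circle_moment \<nu> k = (LINT z|\<nu>. z ^ k)"

definition ansatz_coeff :: "real \<Rightarrow> nat \<Rightarrow> (nat \<Rightarrow> real) \<Rightarrow> (nat \<Rightarrow> real) \<Rightarrow> nat \<Rightarrow> complex" where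
  "ansatz_coeff r n \<rho> \<phi> k =
     complex_of_real (r ^ k) * (\<Sum>\<alpha>=1..n. complex_of_real (\<rho> \<alpha>) * exp (\<i> * of_nat k * complex_of_real (\<phi> \<alpha>)))"

definition circle_rep :: "nat \<Rightarrow> complex measure \<Rightarrow> real \<Rightarrow> nat \<Rightarrow> (nat \<Rightarrow> real) \<Rightarrow> (nat \<Rightarrow> real) \<Rightarrow> bool" where
  "circle_rep N \<nu> r n \<rho> \<phi> \<longleftrightarrow>
     1 \<le> n \<and> n \<le> N \<and>
     (\<forall>\<alpha>\<in>{1..n}. \<rho> \<alpha> > 0 \<and> \<phi> \<alpha> \<in> {-pi..<pi}) \<and>
     (\<forall>k\<le>N. circle_moment \<nu> k = ansatz_coeff r n \<rho> \<phi> k)"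

end

theory Submission
  imports Defs "HOL-Computational_Algebra.Fundamental_Theorem_Algebra"
begin

text \<open>For \<open>r > 0\<close> let \<open>T\<^sub>r\<close> be the Hermitian Toeplitz form of the rescaled moments
  \<open>m\<^sub>k / r\<^bsup>|k|\<^esub>\<close>, \<open>|k| \<le> N\<close>. A representation with radius \<open>r\<close> makes
  \<open>T\<^sub>s\<close>, for every \<open>s \<ge> r\<close>, a positive combination of Poisson kernel forms with parameter
  \<open>r / s\<close>: these are positive definite for \<open>r < s\<close> and of rank one for \<open>s = r\<close>, so that
  \<open>T\<^sub>r\<close> is singular with the node polynomial as a null vector. Hence \<open>r\<close> is the least
  radius with \<open>T\<^sub>r\<close> positive semidefinite, which gives uniqueness; for a fixed \<open>r\<close> the
  nodes of any representation are zeros of the node polynomial of any other, so all higher moments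
  of the two representations agree.

  For existence, \<open>T\<^sub>1\<close> is positive semidefinite, being the form of \<open>\<nu>\<close> itself. At the
  infimum \<open>r\<^sub>*\<close> of the radii with \<open>T\<^sub>r \<ge> 0\<close> the form is still semidefinite by
  continuity and singular because positive definiteness is an open condition. The
  Carath\'eodory--Fej\'er theorem then writes a singular positive semidefinite Toeplitz form as
  the form of at most \<open>N\<close> atoms on the unit circle. If \<open>m\<^sub>1, \<dots>, m\<^sub>N\<close> all vanish the
  representation has radius \<open>0\<close>.\<close>

section \<open>Hermitian Toeplitz forms\<close>

definition toeplitz_form :: "(int \<Rightarrow> complex) \<Rightarrow> nat \<Rightarrow> (nat \<Rightarrow> complex) \<Rightarrow> (nat \<Rightarrow> complex) \<Rightarrow> complex"
  where "toeplitz_form c N d e = (\<Sum>i\<le>N. \<Sum>j\<le>N. cnj (d i) * e j * c (int j - int i))"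

definition hermitian_seq :: "(int \<Rightarrow> complex) \<Rightarrow> bool"
  where "hermitian_seq c \<longleftrightarrow> (\<forall>k. c (- k) = cnj (c k))"

definition poly_form :: "(int \<Rightarrow> complex) \<Rightarrow> nat \<Rightarrow> complex poly \<Rightarrow> complex poly \<Rightarrow> complex"
  where "poly_form c N p q = toeplitz_form c N (coeff p) (coeff q)"

definition toeplitz_psd :: "(int \<Rightarrow> complex) \<Rightarrow> nat \<Rightarrow> bool"
  where "toeplitz_psd c N \<longleftrightarrow> (\<forall>d. 0 \<le> Re (toeplitz_form c N d d))"

lemma toeplitz_psd_poly_form: "toeplitz_psd c N \<Longrightarrow> 0 \<le> Re (poly_form c N p p)"
  by (simp add: toeplitz_psd_def poly_form_def)

lemma poly_form_add_left: "poly_form c N (p + q) w = poly_form c N p w + poly_form c N q w"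
  by (simp add: poly_form_def toeplitz_form_def algebra_simps sum.distrib)

lemma poly_form_add_right: "poly_form c N w (p + q) = poly_form c N w p + poly_form c N w q"
  by (simp add: poly_form_def toeplitz_form_def algebra_simps sum.distrib)

lemma poly_form_smult_left: "poly_form c N (smult a p) w = cnj a * poly_form c N p w"
  by (simp add: poly_form_def toeplitz_form_def algebra_simps sum_distrib_left)

lemma poly_form_smult_right: "poly_form c N w (smult a p) = a * poly_form c N w p"
  by (simp add: poly_form_def toeplitz_form_def algebra_simps sum_distrib_left)

lemma poly_form_0_left [simp]: "poly_form c N 0 w = 0"
  and poly_form_0_right [simp]: "poly_form c N w 0 = 0"
  by (simp_all add: poly_form_def toeplitz_form_def)

lemma poly_form_sum_left: "poly_form c N (sum f A) w = (\<Sum>x\<in>A. poly_form c N (f x) w)"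
  by (induction A rule: infinite_finite_induct) (simp_all add: poly_form_add_left)

lemma poly_form_sum_right: "poly_form c N w (sum f A) = (\<Sum>x\<in>A. poly_form c N w (f x))"
  by (induction A rule: infinite_finite_induct) (simp_all add: poly_form_add_right)

lemma toeplitz_form_cnj:
  assumes "hermitian_seq c"
  shows "cnj (toeplitz_form c N d e) = toeplitz_form c N e d"
proof -
  have c: "cnj (c (int j - int i)) = c (int i - int j)" for i j :: nat
    using assms unfolding hermitian_seq_def by (metis minus_diff_eq complex_cnj_cnj)
  have "cnj (toeplitz_form c N d e) = (\<Sum>i\<le>N. \<Sum>j\<le>N. d i * cnj (e j) * c (int i - int j))"
    unfolding toeplitz_form_def cnj_sum complex_cnj_mult complex_cnj_cnj c ..
  also have "\<dots> = toeplitz_form c N e d"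
    unfolding toeplitz_form_def
    by (subst sum.swap, rule sum.cong[OF refl], rule sum.cong[OF refl]) (simp add: mult_ac)
  finally show ?thesis .
qed

lemma poly_form_cnj: "hermitian_seq c \<Longrightarrow> cnj (poly_form c N p q) = poly_form c N q p"
  by (simp add: poly_form_def toeplitz_form_cnj)

lemma poly_form_real: "hermitian_seq c \<Longrightarrow> Im (poly_form c N p p) = 0"
  using poly_form_cnj[of c N p p] by (metis Reals_cnj_iff complex_is_Real_iff)

lemma poly_form_monom:
  "poly_form c N (monom a i) (monom b j) = (if i \<le> N \<and> j \<le> N then cnj a * b * c (int j - int i) else 0)"
proof -
  have "poly_form c N (monom a i) (monom b j) =
        (\<Sum>i'\<le>N. \<Sum>j'\<le>N. (if j' = j then (if i' = i then cnj a * b * c (int j - int i) else 0) else 0))"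
    unfolding poly_form_def toeplitz_form_def coeff_monom by (intro sum.cong refl) auto
  also have "\<dots> = (if i \<le> N \<and> j \<le> N then cnj a * b * c (int j - int i) else 0)"
    by (cases "j \<le> N") (simp_all add: sum.delta')
  finally show ?thesis .
qed

lemma poly_form_pCons_0:
  assumes "degree p < N" "degree q < N"
  shows "poly_form c N (pCons 0 p) (pCons 0 q) = poly_form c N p q"
proof -
  obtain M where M: "N = Suc M" using assms(1) by (cases N) auto
  have "poly_form c N (pCons 0 p) (pCons 0 q) = (\<Sum>i\<le>M. \<Sum>j\<le>M. cnj (coeff p i) * coeff q j * c (int j - int i))"
    unfolding poly_form_def toeplitz_form_def M
    by (simp del: sum.atMost_Suc add: sum.atMost_Suc_shift coeff_pCons_Suc)
  also have "\<dots> = poly_form c N p q"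
    unfolding poly_form_def toeplitz_form_def M using assms M by (simp add: coeff_eq_0)
  finally show ?thesis .
qed

text \<open>Otherwise \<open>p + a q\<close> with \<open>a = - t cnj (poly_form c N p q)\<close> and small \<open>t > 0\<close>
  would have negative square.\<close>

lemma poly_form_null_orthogonal:
  assumes h: "hermitian_seq c" and psd: "toeplitz_psd c N"
    and p: "poly_form c N p p = 0"
  shows "poly_form c N p q = 0"
proof (rule ccontr)
  define b where "b = poly_form c N p q"
  assume "poly_form c N p q \<noteq> 0"
  hence b0: "cmod b ^ 2 > 0" by (simp add: b_def)
  define Q where "Q = Re (poly_form c N q q)"
  have Q0: "Q \<ge> 0" using toeplitz_psd_poly_form[OF psd] by (simp add: Q_def)
  have QX: "poly_form c N q q = of_real Q" using poly_form_real[OF h, of N q] unfolding Q_def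
    by (simp add: complex_eq_iff)
  define t where "t = 1 / (Q + 1)"
  have t0: "t > 0" using Q0 by (simp add: t_def)
  have tQ: "t * Q < 1" using Q0 by (simp add: t_def field_simps)
  define a where "a = - of_real t * cnj b"
  define u where "u = p + smult a q"
  have qp: "poly_form c N q p = cnj b" using poly_form_cnj[OF h, of N p q] by (simp add: b_def)
  have "poly_form c N u u = poly_form c N p p + a * b + cnj a * cnj b + cnj a * a * poly_form c N q q"
    unfolding u_def
    by (simp add: poly_form_add_left poly_form_add_right poly_form_smult_left poly_form_smult_right
        b_def qp algebra_simps)
  also have "\<dots> = of_real (t * cmod b ^ 2 * (t * Q - 2))"
    unfolding a_def p QX using complex_norm_square[of b]
    by (simp add: algebra_simps power2_eq_square)
  finally have "Re (poly_form c N u u) = t * cmod b ^ 2 * (t * Q - 2)" by simp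
  also have "\<dots> < 0" using t0 b0 tQ by (intro mult_pos_neg) auto
  finally show False using toeplitz_psd_poly_form[OF psd, of u] by simp
qed

lemma poly_form_null_monom_mult:
  assumes h: "hermitian_seq c" and psd: "toeplitz_psd c N"
    and p: "p \<noteq> 0" "degree p \<le> N" "poly_form c N p p = 0"
  shows "m + degree p \<le> N \<Longrightarrow> poly_form c N (monom 1 m * p) w = 0"
proof (induction m arbitrary: w)
  case 0
  then show ?case
    using poly_form_null_orthogonal[OF h psd p(3)] by (simp add: monom_0 one_pCons[symmetric])
next
  case (Suc m)
  define x where "x = monom 1 m * p"
  have dx: "degree x = m + degree p" unfolding x_def using p
    by (simp add: degree_mult_eq degree_monom_eq)
  have "poly_form c N x x = 0" using Suc.IH[of x] Suc.prems dx by (simp add: x_def)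
  hence "poly_form c N (pCons 0 x) (pCons 0 x) = 0"
    using poly_form_pCons_0[of x N x c] dx Suc.prems by simp
  moreover have "degree (pCons 0 x) \<le> N" using dx Suc.prems p by (simp add: x_def)
  moreover have "monom 1 (Suc m) * p = pCons 0 x" by (simp add: x_def monom_Suc)
  ultimately show ?case using poly_form_null_orthogonal[OF h psd] by metis
qed

lemma poly_form_null_mult:
  assumes h: "hermitian_seq c" and psd: "toeplitz_psd c N"
    and p: "p \<noteq> 0" "degree p \<le> N" "poly_form c N p p = 0"
    and u: "degree u + degree p \<le> N"
  shows "poly_form c N (p * u) w = 0"
proof -
  have "p * u = (\<Sum>m\<le>degree u. smult (coeff u m) (monom 1 m * p))"
    by (subst (1) poly_as_sum_of_monoms[symmetric, of u])
       (simp add: sum_distrib_left mult.commute,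
        intro sum.cong refl, metis mult_smult_right smult_monom mult.right_neutral mult.commute)
  hence "poly_form c N (p * u) w = (\<Sum>m\<le>degree u. cnj (coeff u m) * poly_form c N (monom 1 m * p) w)"
    by (simp add: poly_form_sum_left poly_form_smult_left)
  also have "\<dots> = 0"
    using poly_form_null_monom_mult[OF h psd p] u by (intro sum.neutral) auto
  finally show ?thesis .
qed

section \<open>Singular positive semidefinite Toeplitz forms are atomic\<close>

lemma poly_mod_root: "poly p z = 0 \<Longrightarrow> poly (q mod p) z = poly q z"
  by (metis add.left_neutral div_mult_mod_eq mult_zero_right poly_add poly_mult)

locale minimal_null_poly =
  fixes c :: "int \<Rightarrow> complex" and N :: nat and p :: "complex poly"
  assumes hermitian: "hermitian_seq c" and psd: "toeplitz_psd c N" and c0: "c 0 \<noteq> 0"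
    and nonzero: "p \<noteq> 0" and degree_le: "degree p \<le> N" and null: "poly_form c N p p = 0"
    and minimal: "\<And>q. q \<noteq> 0 \<Longrightarrow> degree q \<le> N \<Longrightarrow> poly_form c N q q = 0 \<Longrightarrow> degree p \<le> degree q"
begin

lemma null_left: "poly_form c N p w = 0"
  by (rule poly_form_null_orthogonal[OF hermitian psd null])

lemma null_right: "poly_form c N w p = 0"
  using null_left poly_form_cnj[OF hermitian, of N p w] by simp

lemma form_pos:
  assumes "q \<noteq> 0" "degree q < degree p"
  shows "Re (poly_form c N q q) > 0"
proof -
  have "poly_form c N q q \<noteq> 0" using minimal[of q] assms degree_le by auto
  moreover have "Re (poly_form c N q q) \<ge> 0" by (rule toeplitz_psd_poly_form[OF psd])
  ultimately show ?thesis using poly_form_real[OF hermitian] by (simp add: complex_eq_iff less_le)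
qed

lemma degree_pos: "0 < degree p"
proof (rule ccontr)
  assume "\<not> 0 < degree p"
  then obtain a where a: "p = monom a 0" by (metis degree_eq_zeroE monom_0 neq0_conv)
  hence "a \<noteq> 0" using nonzero by simp
  hence "poly_form c N p p \<noteq> 0" using c0 a by (simp add: poly_form_monom)
  thus False using null by simp
qed

definition quot :: "complex \<Rightarrow> complex poly"
  where "quot \<alpha> = p div [:-\<alpha>, 1:]"

lemma
  assumes "poly p \<alpha> = 0"
  shows quot_factor: "p = [:-\<alpha>, 1:] * quot \<alpha>"
    and pCons_0_quot: "pCons 0 (quot \<alpha>) = p + smult \<alpha> (quot \<alpha>)"
    and quot_nonzero: "quot \<alpha> \<noteq> 0"
    and degree_quot: "degree (quot \<alpha>) = degree p - 1"
proof -
  have "[:-\<alpha>, 1:] dvd p" using assms by (simp add: dvd_iff_poly_eq_0)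
  thus factor: "p = [:-\<alpha>, 1:] * quot \<alpha>" unfolding quot_def by (metis dvd_mult_div_cancel)
  show "pCons 0 (quot \<alpha>) = p + smult \<alpha> (quot \<alpha>)" by (subst (2) factor) (simp add: algebra_simps)
  show nz: "quot \<alpha> \<noteq> 0" using factor nonzero by auto
  have "degree p = degree [:-\<alpha>, 1:] + degree (quot \<alpha>)"
    by (subst factor, rule degree_mult_eq) (use nz in auto)
  thus "degree (quot \<alpha>) = degree p - 1" by simp
qed

text \<open>Since \<open>x * quot \<alpha> = p + \<alpha> quot \<alpha>\<close> and \<open>p\<close> is null, the isometry \<open>q \<mapsto> x q\<close>
  acts on the quotients as multiplication by the root.\<close>

lemma form_quot_eigen:
  assumes "poly p \<alpha> = 0" "poly p \<beta> = 0"
  shows "poly_form c N (quot \<alpha>) (quot \<beta>) = cnj \<alpha> * \<beta> * poly_form c N (quot \<alpha>) (quot \<beta>)"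
proof -
  have d: "degree (quot \<alpha>) < degree p" "degree (quot \<beta>) < degree p"
    using degree_quot assms degree_pos by auto
  have "poly_form c N (quot \<alpha>) (quot \<beta>) = poly_form c N (pCons 0 (quot \<alpha>)) (pCons 0 (quot \<beta>))"
    using poly_form_pCons_0 d degree_le by simp
  also have "\<dots> = poly_form c N p p + \<beta> * poly_form c N p (quot \<beta>) + cnj \<alpha> * poly_form c N (quot \<alpha>) p
      + cnj \<alpha> * \<beta> * poly_form c N (quot \<alpha>) (quot \<beta>)"
    unfolding pCons_0_quot[OF assms(1)] pCons_0_quot[OF assms(2)]
    by (simp add: poly_form_add_left poly_form_add_right poly_form_smult_left poly_form_smult_right
        algebra_simps)
  also have "\<dots> = cnj \<alpha> * \<beta> * poly_form c N (quot \<alpha>) (quot \<beta>)"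
    using null null_left null_right by simp
  finally show ?thesis .
qed

lemma form_quot_pos:
  assumes "poly p \<alpha> = 0"
  shows "Re (poly_form c N (quot \<alpha>) (quot \<alpha>)) > 0"
proof (rule form_pos)
  show "quot \<alpha> \<noteq> 0" by (rule quot_nonzero[OF assms])
  show "degree (quot \<alpha>) < degree p" using degree_quot[OF assms] degree_pos by linarith
qed

lemma root_cnj_mult:
  assumes "poly p \<alpha> = 0"
  shows "cnj \<alpha> * \<alpha> = 1"
proof -
  have "poly_form c N (quot \<alpha>) (quot \<alpha>) \<noteq> 0" using form_quot_pos[OF assms] by auto
  thus ?thesis using form_quot_eigen[OF assms assms] by simp
qed

lemma root_norm:
  assumes "poly p \<alpha> = 0"
  shows "cmod \<alpha> = 1"
proof -
  have "of_real (cmod \<alpha> ^ 2) = (1::complex)"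
    using root_cnj_mult[OF assms] complex_norm_square[of \<alpha>] by (simp add: mult.commute)
  hence "cmod \<alpha> ^ 2 = 1" by (simp only: of_real_eq_1_iff)
  thus ?thesis using norm_ge_zero[of \<alpha>] by (auto simp add: power2_eq_1_iff)
qed

text \<open>For a double root, \<open>quot \<alpha> = (x - \<alpha>) h\<close>, and shifting \<open>h\<close> forces
  \<open>\<alpha> * poly_form c N (quot \<alpha>) (quot \<alpha>) = 0\<close>.\<close>

lemma root_simple:
  assumes root: "poly p \<alpha> = 0"
  shows "poly (quot \<alpha>) \<alpha> \<noteq> 0"
proof
  assume "poly (quot \<alpha>) \<alpha> = 0"
  hence "[:-\<alpha>, 1:] dvd quot \<alpha>" by (simp add: dvd_iff_poly_eq_0)
  then obtain h where h: "quot \<alpha> = [:-\<alpha>, 1:] * h" by (elim dvdE)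
  have "h \<noteq> 0" using h quot_nonzero[OF root] by auto
  hence dh: "degree (pCons 0 h) = degree (quot \<alpha>)" "degree h < degree (quot \<alpha>)"
    using h degree_mult_eq[of "[:-\<alpha>, 1:]" h] by auto
  have dq: "degree (quot \<alpha>) < N" using degree_quot[OF root] degree_pos degree_le by simp
  have "poly_form c N h (quot \<alpha>) = poly_form c N (pCons 0 h) (pCons 0 (quot \<alpha>))"
    using poly_form_pCons_0 dh dq by simp
  also have "\<dots> = \<alpha> * poly_form c N (pCons 0 h) (quot \<alpha>)"
    unfolding pCons_0_quot[OF root] using null_right dh dq
    by (simp add: poly_form_add_right poly_form_smult_right)
  also have "pCons 0 h = quot \<alpha> + smult \<alpha> h" using h by (simp add: algebra_simps)
  also have "\<alpha> * poly_form c N (quot \<alpha> + smult \<alpha> h) (quot \<alpha>) =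
      \<alpha> * poly_form c N (quot \<alpha>) (quot \<alpha>) + (cnj \<alpha> * \<alpha>) * poly_form c N h (quot \<alpha>)"
    by (simp add: poly_form_add_left poly_form_smult_left algebra_simps)
  also have "cnj \<alpha> * \<alpha> = 1" by (rule root_cnj_mult[OF root])
  finally have "\<alpha> * poly_form c N (quot \<alpha>) (quot \<alpha>) = 0" by simp
  thus False using root_norm[OF root] form_quot_pos[OF root] by auto
qed

lemma form_quot_orthogonal:
  assumes "poly p \<alpha> = 0" "poly p \<beta> = 0" "\<alpha> \<noteq> \<beta>"
  shows "poly_form c N (quot \<alpha>) (quot \<beta>) = 0"
proof (rule ccontr)
  assume "poly_form c N (quot \<alpha>) (quot \<beta>) \<noteq> 0"
  hence "cnj \<alpha> * \<beta> = 1" using form_quot_eigen[OF assms(1,2)] by simp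
  hence "\<alpha> * (cnj \<alpha> * \<beta>) = \<alpha>" by simp
  hence "(cnj \<alpha> * \<alpha>) * \<beta> = \<alpha>" by (simp only: mult_ac)
  thus False using root_cnj_mult[OF assms(1)] assms(3) by simp
qed

lemma finite_roots: "finite {x. poly p x = 0}"
  by (rule poly_roots_finite[OF nonzero])

lemma card_roots: "card {x. poly p x = 0} = degree p"
proof -
  define S where "S = {x. poly p x = 0}"
  have order: "order z p = 1" if "z \<in> S" for z
  proof -
    have "order z p \<noteq> 0" using that nonzero order_root[of p z] by (auto simp: S_def)
    moreover have "\<not> 2 \<le> order z p"
    proof
      assume "2 \<le> order z p"
      hence "[:-z, 1:] ^ 2 dvd p" using order_divides by blast
      then obtain g where g: "p = [:-z, 1:] ^ 2 * g" by (elim dvdE)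
      have "quot z = [:-z, 1:] * g" unfolding quot_def
        by (subst g, unfold power2_eq_square mult.assoc, rule nonzero_mult_div_cancel_left) simp
      hence "poly (quot z) z = 0" by simp
      moreover have "poly p z = 0" using that by (simp add: S_def)
      ultimately show False using root_simple by blast
    qed
    ultimately show ?thesis by simp
  qed
  have "p = smult (lead_coeff p) (\<Prod>z\<in>S. [:-z, 1:] ^ order z p)"
    using complex_poly_decompose[of p] by (simp add: S_def)
  also have "(\<Prod>z\<in>S. [:-z, 1:] ^ order z p) = (\<Prod>z\<in>S. [:-z, 1:])"
    using order by (intro prod.cong) auto
  finally have "degree p = degree (smult (lead_coeff p) (\<Prod>z\<in>S. [:-z, 1:]))"
    by (rule arg_cong)
  also have "\<dots> = degree (\<Prod>z\<in>S. [:-z, 1:])" using nonzero by simp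
  also have "\<dots> = card S" by (subst degree_prod_sum_eq) auto
  finally show ?thesis by (simp add: S_def)
qed

lemma poly_quot_other_root:
  assumes "poly p \<beta> = 0" "poly p \<gamma> = 0" "\<beta> \<noteq> \<gamma>"
  shows "poly (quot \<beta>) \<gamma> = 0"
proof -
  have "poly p \<gamma> = (\<gamma> - \<beta>) * poly (quot \<beta>) \<gamma>"
    by (subst quot_factor[OF assms(1)]) (simp add: algebra_simps)
  thus ?thesis using assms by simp
qed

lemma lagrange_interpolation:
  assumes deg: "degree f < degree p"
  shows "f = (\<Sum>\<beta>\<in>{x. poly p x = 0}. smult (poly f \<beta> / poly (quot \<beta>) \<beta>) (quot \<beta>))"
    (is "f = ?L")
proof (rule ccontr)
  define S where "S = {x. poly p x = 0}"
  assume "f \<noteq> ?L"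
  hence g0: "f - ?L \<noteq> 0" by simp
  have "degree ?L \<le> degree p - 1" by (intro degree_sum_le finite_roots) (simp add: degree_quot)
  hence "degree (f - ?L) \<le> degree p - 1" using deg by (intro degree_diff_le) auto
  hence "degree (f - ?L) < degree p" using degree_pos by linarith
  moreover have "S \<subseteq> {x. poly (f - ?L) x = 0}"
  proof
    fix \<gamma> assume \<gamma>: "\<gamma> \<in> S"
    have "poly ?L \<gamma> = (\<Sum>\<beta>\<in>S. if \<beta> = \<gamma> then poly f \<gamma> else 0)"
      unfolding poly_sum S_def[symmetric] using root_simple poly_quot_other_root \<gamma>
      by (intro sum.cong refl) (auto simp: S_def)
    also have "\<dots> = poly f \<gamma>" using \<gamma> finite_roots by (simp add: sum.delta' S_def)
    finally show "\<gamma> \<in> {x. poly (f - ?L) x = 0}" by simp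
  qed
  hence "card S \<le> degree (f - ?L)"
    using card_mono[OF poly_roots_finite[OF g0]] card_poly_roots_bound[OF g0] order.trans by blast
  ultimately show False using card_roots by (simp add: S_def)
qed

text \<open>The value of the form on the Lagrange basis polynomial \<open>quot \<beta> / poly (quot \<beta>) \<beta>\<close>.\<close>

definition weight :: "complex \<Rightarrow> real"
  where "weight \<beta> = Re (poly_form c N (quot \<beta>) (quot \<beta>)) / (cmod (poly (quot \<beta>) \<beta>))\<^sup>2"

lemma weight_pos: "poly p \<beta> = 0 \<Longrightarrow> weight \<beta> > 0"
  using form_quot_pos root_simple by (simp add: weight_def)

lemma form_quot_weight:
  assumes "poly p \<beta> = 0"
  shows "cnj (1 / poly (quot \<beta>) \<beta>) * (y / poly (quot \<beta>) \<beta>) * poly_form c N (quot \<beta>) (quot \<beta>)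
      = of_real (weight \<beta>) * y"
proof -
  define x where "x = poly (quot \<beta>) \<beta>"
  have x0: "x \<noteq> 0" "cnj x \<noteq> 0" using root_simple[OF assms] by (simp_all add: x_def)
  have B: "poly_form c N (quot \<beta>) (quot \<beta>) = of_real (Re (poly_form c N (quot \<beta>) (quot \<beta>)))"
    using poly_form_real[OF hermitian] by (simp add: complex_eq_iff)
  have nx: "(complex_of_real (cmod x))\<^sup>2 = x * cnj x" using complex_norm_square by simp
  show ?thesis unfolding weight_def x_def[symmetric]
    by (subst B) (simp add: nx field_simps x0)
qed

lemma moment_eq_form_mod:
  assumes k: "k \<le> N"
  shows "c (int k) = poly_form c N 1 (monom 1 k mod p)"
proof -
  define r where "r = monom 1 k mod p"
  define u where "u = monom 1 k div p"
  have mk: "monom 1 k = p * u + r" unfolding r_def u_def by (simp add: mult.commute)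
  have du: "degree u + degree p \<le> N"
  proof (cases "u = 0")
    case False
    have "degree r < degree p" using degree_mod_less[OF nonzero, of "monom 1 k"] degree_pos
      by (auto simp: r_def)
    hence "degree (monom 1 k - r) \<le> N"
      using k degree_le by (intro degree_diff_le) (auto simp: degree_monom_eq)
    moreover have "degree (p * u) = degree (monom 1 k - r)" using mk by simp
    ultimately show ?thesis using False nonzero by (simp add: degree_mult_eq)
  qed (use degree_le in simp)
  have "c (int k) = poly_form c N 1 (monom 1 k)"
    using k poly_form_monom[of c N 1 0 1 k] by (simp add: monom_0 one_pCons)
  also have "\<dots> = poly_form c N 1 (p * u) + poly_form c N 1 r" unfolding mk by (simp add: poly_form_add_right)
  also have "poly_form c N 1 (p * u) = 0"
    using poly_form_null_mult[OF hermitian psd nonzero degree_le null du, of 1]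
      poly_form_cnj[OF hermitian, of N "p * u" 1] by simp
  finally show ?thesis by (simp add: r_def)
qed

lemma moment_atomic:
  assumes k: "k \<le> N"
  shows "c (int k) = (\<Sum>\<beta>\<in>{x. poly p x = 0}. of_real (weight \<beta>) * \<beta> ^ k)"
proof -
  define S where "S = {x. poly p x = 0}"
  define r where "r = monom 1 k mod p"
  have dr: "degree r < degree p" using degree_mod_less[OF nonzero, of "monom 1 k"] degree_pos
    by (auto simp: r_def)
  have r_root: "poly r \<beta> = \<beta> ^ k" if "\<beta> \<in> S" for \<beta>
    using that by (simp add: S_def r_def poly_mod_root poly_monom)
  have "c (int k) = poly_form c N (\<Sum>\<gamma>\<in>S. smult (poly 1 \<gamma> / poly (quot \<gamma>) \<gamma>) (quot \<gamma>))
                       (\<Sum>\<beta>\<in>S. smult (poly r \<beta> / poly (quot \<beta>) \<beta>) (quot \<beta>))"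
    using moment_eq_form_mod[OF k] lagrange_interpolation[of 1] lagrange_interpolation[OF dr] degree_pos
    by (simp add: S_def r_def)
  also have "\<dots> = (\<Sum>\<gamma>\<in>S. \<Sum>\<beta>\<in>S. cnj (1 / poly (quot \<gamma>) \<gamma>) * (poly r \<beta> / poly (quot \<beta>) \<beta>)
                     * poly_form c N (quot \<gamma>) (quot \<beta>))"
    by (simp only: poly_form_sum_left poly_form_sum_right poly_form_smult_left poly_form_smult_right
        sum_distrib_left mult.assoc poly_1) (subst sum.swap, simp add: mult_ac)
  also have "\<dots> = (\<Sum>\<gamma>\<in>S. \<Sum>\<beta>\<in>S. if \<beta> = \<gamma> then of_real (weight \<gamma>) * \<gamma> ^ k else 0)"
    using form_quot_orthogonal form_quot_weight r_root by (intro sum.cong refl) (auto simp: S_def)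
  also have "\<dots> = (\<Sum>\<beta>\<in>S. of_real (weight \<beta>) * \<beta> ^ k)"
    using finite_roots by (simp add: sum.delta' S_def)
  finally show ?thesis by (simp add: S_def)
qed

end

text \<open>Carath\'eodory--Fej\'er. The atoms are the zeros of a null polynomial of minimal degree.\<close>

theorem psd_singular_toeplitz_atomic:
  assumes "hermitian_seq c" "toeplitz_psd c N" "c 0 \<noteq> 0"
    and "p0 \<noteq> 0" "degree p0 \<le> N" "poly_form c N p0 p0 = 0"
  obtains S \<rho> where "finite S" "S \<noteq> {}" "card S \<le> N" "\<And>\<beta>. \<beta> \<in> S \<Longrightarrow> cmod \<beta> = 1 \<and> \<rho> \<beta> > (0::real)"
    "\<And>k. k \<le> N \<Longrightarrow> c (int k) = (\<Sum>\<beta>\<in>S. of_real (\<rho> \<beta>) * \<beta> ^ k)"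
proof -
  define P where "P q \<longleftrightarrow> q \<noteq> 0 \<and> degree q \<le> N \<and> poly_form c N q q = 0" for q
  obtain p where "P p" and "\<And>q. P q \<Longrightarrow> degree p \<le> degree q"
    using ex_has_least_nat[of P p0 degree] assms unfolding P_def by blast
  then interpret minimal_null_poly c N p using assms by unfold_locales (auto simp: P_def)
  have "{x. poly p x = 0} \<noteq> {}"
    using card_roots degree_pos by (metis card.empty less_irrefl)
  then show ?thesis
    using that[of "{x. poly p x = 0}" weight] finite_roots card_roots degree_le root_norm weight_pos
      moment_atomic by auto
qed

section \<open>The Poisson kernel form\<close>

text \<open>\<open>s ^ \<bar>k\<bar>\<close> are the Fourier coefficients of the Poisson kernel \<open>2\<pi> P_s\<close>.\<close>

definition poisson_form :: "real \<Rightarrow> nat \<Rightarrow> (nat \<Rightarrow> complex) \<Rightarrow> complex"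
  where "poisson_form s n e = toeplitz_form (\<lambda>k. of_real (s ^ nat \<bar>k\<bar>)) n e e"

definition poisson_row :: "real \<Rightarrow> nat \<Rightarrow> (nat \<Rightarrow> complex) \<Rightarrow> complex"
  where "poisson_row s n e = (\<Sum>j\<le>n. e j * of_real (s ^ j))"

lemma poisson_row_Suc: "poisson_row s (Suc n) e = e 0 + of_real s * poisson_row s n (\<lambda>j. e (Suc j))"
  unfolding poisson_row_def
  by (simp del: sum.atMost_Suc add: sum.atMost_Suc_shift sum_distrib_left algebra_simps)

lemma poisson_form_Suc:
  "poisson_form s (Suc n) e = cnj (e 0) * e 0 + cnj (e 0) * of_real s * poisson_row s n (\<lambda>j. e (Suc j))
     + e 0 * of_real s * cnj (poisson_row s n (\<lambda>j. e (Suc j))) + poisson_form s n (\<lambda>j. e (Suc j))"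
  unfolding poisson_form_def toeplitz_form_def poisson_row_def
  by (simp del: sum.atMost_Suc add: sum.atMost_Suc_shift sum.distrib sum_distrib_left cnj_sum
       algebra_simps nat_add_distrib)

text \<open>Induction on \<open>n\<close> through the identity
  \<open>D (n + 1) e = (1 - s\<^sup>2) |poisson_row s n e'|\<^sup>2 + D n e'\<close>, where \<open>e' j = e (j + 1)\<close>.\<close>

lemma poisson_form_minus_row:
  assumes s: "0 \<le> s" "s < 1"
  defines "D n e \<equiv> poisson_form s n e - cnj (poisson_row s n e) * poisson_row s n e"
  shows "Im (D n e) = 0 \<and> 0 \<le> Re (D n e) \<and> (poisson_form s n e = 0 \<longrightarrow> (\<forall>j\<le>n. e j = 0))"
proof (induction n arbitrary: e)
  case 0
  show ?case by (simp add: D_def poisson_form_def toeplitz_form_def poisson_row_def)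
next
  case (Suc n)
  define e' where "e' = (\<lambda>j. e (Suc j))"
  define y where "y = poisson_row s n e'"
  note IH = Suc.IH[of e', folded y_def]
  have norm_sq: "cnj z * z = of_real (cmod z ^ 2)" for z using complex_norm_square[of z] by (simp add: mult.commute)
  have "D (Suc n) e = of_real (1 - s\<^sup>2) * (cnj y * y) + D n e'"
    unfolding D_def poisson_form_Suc poisson_row_Suc e'_def[symmetric] y_def[symmetric]
    by (simp add: algebra_simps power2_eq_square)
  hence D: "D (Suc n) e = of_real ((1 - s\<^sup>2) * cmod y ^ 2) + D n e'" by (simp add: norm_sq)
  have s2: "1 - s\<^sup>2 > 0" using s by (simp add: power_less_one_iff abs_square_less_1)
  have Im: "Im (D (Suc n) e) = 0" and Re: "Re (D (Suc n) e) \<ge> 0" using IH s2 unfolding D by auto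
  have "\<forall>j\<le>Suc n. e j = 0" if K0: "poisson_form s (Suc n) e = 0"
  proof -
    define Y where "Y = poisson_row s (Suc n) e"
    have "cmod Y ^ 2 + Re (D (Suc n) e) = 0" using K0 by (simp add: D_def Y_def norm_sq)
    hence "Y = 0" and D0: "Re (D (Suc n) e) = 0" using Re by (simp_all add: add_nonneg_eq_0_iff)
    have "(1 - s\<^sup>2) * cmod y ^ 2 = 0" and "Re (D n e') = 0"
      using D0 IH s2 unfolding D by (simp_all add: add_nonneg_eq_0_iff)
    hence "y = 0" and "D n e' = 0" using s2 IH by (auto simp: complex_eq_iff)
    hence "poisson_form s n e' = 0" by (simp add: D_def y_def[symmetric])
    hence "\<forall>j\<le>n. e (Suc j) = 0" using IH by (simp add: e'_def)
    moreover have "e 0 = 0" using \<open>Y = 0\<close> \<open>y = 0\<close> by (simp add: Y_def poisson_row_Suc y_def e'_def)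
    ultimately show ?thesis by (metis Suc_le_mono not0_implies_Suc)
  qed
  thus ?case using Im Re by blast
qed

lemma poisson_form_pos:
  assumes s: "0 \<le> s" "s < 1" and e: "j \<le> n" "e j \<noteq> 0"
  shows "Re (poisson_form s n e) > 0"
proof -
  define Y where "Y = poisson_row s n e"
  have "cnj Y * Y = of_real (cmod Y ^ 2)" using complex_norm_square[of Y] by (simp add: mult.commute)
  moreover note bound = poisson_form_minus_row[OF s, of n e, folded Y_def]
  ultimately have "Im (poisson_form s n e) = 0" "0 \<le> Re (poisson_form s n e)"
    by (auto intro: order.trans[OF zero_le_power2])
  moreover have "poisson_form s n e \<noteq> 0" using bound e by blast
  ultimately show ?thesis by (simp add: complex_eq_iff less_le)
qed

lemma poly_altdef_le:
  fixes p :: "'a :: {comm_semiring_0, semiring_1} poly"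
  assumes "degree p \<le> N"
  shows "poly p x = (\<Sum>j\<le>N. coeff p j * x ^ j)"
  unfolding poly_altdef using assms by (intro sum.mono_neutral_left) (auto simp: coeff_eq_0)

lemma poisson_form_1_poly:
  assumes "degree p \<le> N"
  shows "poisson_form 1 N (\<lambda>j. coeff p j * x ^ j) = of_real ((cmod (poly p x))\<^sup>2)"
proof -
  have "poisson_form 1 N (\<lambda>j. coeff p j * x ^ j) = cnj (poly p x) * poly p x"
    unfolding poisson_form_def toeplitz_form_def poly_altdef_le[OF assms]
    by (simp add: cnj_sum sum_distrib_left sum_distrib_right mult.commute)
  thus ?thesis using complex_norm_square[of "poly p x"] by (simp add: mult.commute)
qed

lemma cnj_power_mult_power_unit:
  assumes "cmod \<omega> = 1"
  shows "cnj \<omega> ^ i * \<omega> ^ j = \<omega> powi (int j - int i)"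
proof -
  have "\<omega> \<noteq> 0" using assms by auto
  hence "\<omega> powi (int j - int i) = \<omega> ^ j / \<omega> ^ i" by (simp add: power_int_diff)
  thus ?thesis using assms by (simp add: divide_conv_cnj norm_power mult.commute flip: complex_cnj_power)
qed

lemma cnj_power_mult_power_unit_cases:
  assumes "cmod z = 1"
  shows "cnj z ^ i * z ^ j = (if i \<le> j then z ^ (j - i) else cnj z ^ (i - j))"
proof -
  have u: "cnj z * z = 1" using complex_norm_square[of z] assms by (simp add: mult.commute)
  show ?thesis
  proof (cases "i \<le> j")
    case True
    hence "cnj z ^ i * z ^ j = (cnj z * z) ^ i * z ^ (j - i)"
      by (simp add: power_mult_distrib mult.assoc flip: power_add)
    thus ?thesis using True u by simp
  next
    case False
    hence "cnj z ^ i * z ^ j = (cnj z * z) ^ j * cnj z ^ (i - j)"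
      by (simp add: power_mult_distrib mult_ac flip: power_add)
    thus ?thesis using False u by simp
  qed
qed

lemma toeplitz_form_atomic:
  assumes unit: "\<And>\<alpha>. \<alpha> \<in> A \<Longrightarrow> cmod (\<omega> \<alpha>) = 1"
    and c: "\<And>k. \<bar>k\<bar> \<le> int N \<Longrightarrow> c k = of_real (s ^ nat \<bar>k\<bar>) * (\<Sum>\<alpha>\<in>A. of_real (\<rho> \<alpha>) * \<omega> \<alpha> powi k)"
  shows "toeplitz_form c N d d = (\<Sum>\<alpha>\<in>A. of_real (\<rho> \<alpha>) * poisson_form s N (\<lambda>j. d j * \<omega> \<alpha> ^ j))"
proof -
  have "c (int j - int i) = (\<Sum>\<alpha>\<in>A. of_real (\<rho> \<alpha>) * (cnj (\<omega> \<alpha>) ^ i * \<omega> \<alpha> ^ j)) * of_real (s ^ nat \<bar>int j - int i\<bar>)"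
    if "i \<le> N" "j \<le> N" for i j
  proof -
    have "(\<Sum>\<alpha>\<in>A. of_real (\<rho> \<alpha>) * (cnj (\<omega> \<alpha>) ^ i * \<omega> \<alpha> ^ j)) =
        (\<Sum>\<alpha>\<in>A. of_real (\<rho> \<alpha>) * \<omega> \<alpha> powi (int j - int i))"
      using unit by (intro sum.cong refl) (simp add: cnj_power_mult_power_unit)
    moreover have "\<bar>int j - int i\<bar> \<le> int N" using that by auto
    ultimately show ?thesis using c by (metis mult.commute)
  qed
  hence "toeplitz_form c N d d = (\<Sum>i\<le>N. \<Sum>j\<le>N. \<Sum>\<alpha>\<in>A. of_real (\<rho> \<alpha>) *
          (cnj (d i * \<omega> \<alpha> ^ i) * (d j * \<omega> \<alpha> ^ j) * of_real (s ^ nat \<bar>int j - int i\<bar>)))"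
    unfolding toeplitz_form_def by (intro sum.cong refl) (simp add: sum_distrib_left sum_distrib_right mult_ac)
  also have "\<dots> = (\<Sum>\<alpha>\<in>A. \<Sum>i\<le>N. \<Sum>j\<le>N. of_real (\<rho> \<alpha>) *
          (cnj (d i * \<omega> \<alpha> ^ i) * (d j * \<omega> \<alpha> ^ j) * of_real (s ^ nat \<bar>int j - int i\<bar>)))"
    by (subst sum.swap, subst (2) sum.swap) (rule refl)
  also have "\<dots> = (\<Sum>\<alpha>\<in>A. of_real (\<rho> \<alpha>) * poisson_form s N (\<lambda>j. d j * \<omega> \<alpha> ^ j))"
    unfolding poisson_form_def toeplitz_form_def by (simp add: sum_distrib_left)
  finally show ?thesis .
qed

text \<open>The moments of \<open>\<nu>\<close> divided by \<open>r ^ \<bar>k\<bar>\<close>, extended to negative indices by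
  \<open>m\<^sub>-\<^sub>k = cnj m\<^sub>k\<close>; for an ansatz with parameter \<open>r\<close> these are the moments of the
  atomic measure \<open>\<Sum>\<^sub>\<alpha> \<rho>\<^sub>\<alpha> \<delta>\<^sub>\<phi>\<^sub>\<alpha>\<close>.\<close>

definition scaled_moment :: "complex measure \<Rightarrow> real \<Rightarrow> int \<Rightarrow> complex"
  where "scaled_moment \<nu> r k =
    (if 0 \<le> k then circle_moment \<nu> (nat k) else cnj (circle_moment \<nu> (nat (- k)))) / of_real (r ^ nat \<bar>k\<bar>)"

lemma circle_moment_0: "circle_moment \<nu> 0 = of_real (measure \<nu> (space \<nu>))"
  by (simp add: circle_moment_def scaleR_conv_of_real)

lemma hermitian_scaled_moment: "hermitian_seq (scaled_moment \<nu> r)"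
  unfolding hermitian_seq_def
proof
  fix k :: int
  show "scaled_moment \<nu> r (- k) = cnj (scaled_moment \<nu> r k)"
    by (cases "k = 0") (auto simp: scaled_moment_def circle_moment_0)
qed

lemma ansatz_coeff_cis:
  "ansatz_coeff r n \<rho> \<phi> k = of_real (r ^ k) * (\<Sum>\<alpha>=1..n. of_real (\<rho> \<alpha>) * cis (\<phi> \<alpha>) ^ k)"
  unfolding ansatz_coeff_def cis_conv_exp
  by (intro arg_cong2[where f = "(*)"] refl sum.cong) (simp_all add: exp_of_nat_mult[symmetric] mult_ac)

lemma scaled_moment_rep:
  assumes rep: "circle_rep N \<nu> r n \<rho> \<phi>" and r: "0 \<le> r" "0 < r'" and k: "\<bar>k\<bar> \<le> int N"
  shows "scaled_moment \<nu> r' k = of_real ((r / r') ^ nat \<bar>k\<bar>) * (\<Sum>\<alpha>=1..n. of_real (\<rho> \<alpha>) * cis (\<phi> \<alpha>) powi k)"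
proof -
  have mom: "circle_moment \<nu> j = of_real (r ^ j) * (\<Sum>\<alpha>=1..n. of_real (\<rho> \<alpha>) * cis (\<phi> \<alpha>) ^ j)"
    if "j \<le> N" for j
    using rep that unfolding circle_rep_def ansatz_coeff_cis by blast
  show ?thesis
  proof (cases "0 \<le> k")
    case True
    thus ?thesis using k r by (simp add: scaled_moment_def mom power_int_def power_divide)
  next
    case False
    have "cnj (cis x) ^ m = cis x powi (- int m)" for x m
      by (simp add: cis_cnj power_int_minus power_inverse flip: cis_inverse)
    thus ?thesis using False k r
      by (simp add: scaled_moment_def mom power_divide cnj_sum)
  qed
qed

section \<open>Uniqueness\<close>

lemma circle_rep_basic:
  assumes "circle_rep N \<nu> r n \<rho> \<phi>"
  shows "1 \<le> n" "n \<le> N" "\<And>\<alpha>. \<alpha> \<in> {1..n} \<Longrightarrow> \<rho> \<alpha> > 0"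
  using assms unfolding circle_rep_def by auto

lemma toeplitz_form_rep:
  assumes rep: "circle_rep N \<nu> r n \<rho> \<phi>" and r: "0 \<le> r" "0 < r'"
  shows "toeplitz_form (scaled_moment \<nu> r') N d d =
    (\<Sum>\<alpha>=1..n. of_real (\<rho> \<alpha>) * poisson_form (r / r') N (\<lambda>j. d j * cis (\<phi> \<alpha>) ^ j))"
  by (rule toeplitz_form_atomic) (simp_all add: scaled_moment_rep[OF rep r])

definition node_poly :: "nat \<Rightarrow> (nat \<Rightarrow> real) \<Rightarrow> complex poly"
  where "node_poly n \<phi> = (\<Prod>\<alpha>\<in>{1..n}. [:- cis (\<phi> \<alpha>), 1:])"

lemma degree_node_poly: "degree (node_poly n \<phi>) = n"
  unfolding node_poly_def by (subst degree_prod_sum_eq) auto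

lemma coeff_node_poly_top: "coeff (node_poly n \<phi>) n = 1"
  using lead_coeff_prod[of "\<lambda>\<alpha>. [:- cis (\<phi> \<alpha>), 1:]" "{1..n}"] degree_node_poly[of n \<phi>]
  by (simp add: node_poly_def)

lemma poly_node_poly_node: "\<alpha> \<in> {1..n} \<Longrightarrow> poly (node_poly n \<phi>) (cis (\<phi> \<alpha>)) = 0"
  unfolding node_poly_def poly_prod by (intro prod_zero) auto

lemma toeplitz_form_node_poly:
  assumes rep: "circle_rep N \<nu> r n \<rho> \<phi>" and r: "0 < r"
  shows "toeplitz_form (scaled_moment \<nu> r) N (coeff (node_poly n \<phi>)) (coeff (node_poly n \<phi>)) = 0"
proof -
  have "degree (node_poly n \<phi>) \<le> N" using circle_rep_basic[OF rep] by (simp add: degree_node_poly)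
  thus ?thesis
    using r poly_node_poly_node by (simp add: toeplitz_form_rep[OF rep] poisson_form_1_poly)
qed

text \<open>At a larger radius \<open>r\<^sub>2\<close>, the ansatz of radius \<open>r\<^sub>1\<close> gives a positive definite form
  (Poisson kernel with \<open>s = r\<^sub>1 / r\<^sub>2 < 1\<close>), while the ansatz of radius \<open>r\<^sub>2\<close> has
  its node polynomial as a null vector.\<close>

lemma circle_rep_radius_le:
  assumes rep1: "circle_rep N \<nu> r1 n \<rho> \<phi>" and rep2: "circle_rep N \<nu> r2 n' \<rho>' \<phi>'"
    and r1: "0 \<le> r1"
  shows "r2 \<le> r1"
proof (rule ccontr)
  assume "\<not> r2 \<le> r1"
  hence r2: "0 < r2" and s: "0 \<le> r1 / r2" "r1 / r2 < 1" using r1 by auto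
  define p where "p = node_poly n' \<phi>'"
  have "Re (toeplitz_form (scaled_moment \<nu> r2) N (coeff p) (coeff p)) > 0"
    unfolding toeplitz_form_rep[OF rep1 r1 r2] Re_sum
  proof (intro sum_pos)
    fix \<alpha> assume \<alpha>: "\<alpha> \<in> {1..n}"
    have "coeff p n' * cis (\<phi> \<alpha>) ^ n' \<noteq> 0" by (simp add: p_def coeff_node_poly_top)
    hence "Re (poisson_form (r1 / r2) N (\<lambda>j. coeff p j * cis (\<phi> \<alpha>) ^ j)) > 0"
      by (rule poisson_form_pos[OF s circle_rep_basic(2)[OF rep2]])
    thus "0 < Re (of_real (\<rho> \<alpha>) * poisson_form (r1 / r2) N (\<lambda>j. coeff p j * cis (\<phi> \<alpha>) ^ j))"
      using circle_rep_basic(3)[OF rep1 \<alpha>] by simp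
  qed (use circle_rep_basic(1)[OF rep1] in auto)
  thus False using toeplitz_form_node_poly[OF rep2 r2] by (simp add: p_def)
qed

lemma poly_node_poly_other_rep:
  assumes rep: "circle_rep N \<nu> r n \<rho> \<phi>" and rep': "circle_rep N \<nu> r n' \<rho>' \<phi>'"
    and r: "0 < r" and \<beta>: "\<beta> \<in> {1..n'}"
  shows "poly (node_poly n \<phi>) (cis (\<phi>' \<beta>)) = 0"
proof -
  define p where "p = node_poly n \<phi>"
  have "degree p \<le> N" using circle_rep_basic[OF rep] by (simp add: p_def degree_node_poly)
  hence "toeplitz_form (scaled_moment \<nu> r) N (coeff p) (coeff p) =
      of_real (\<Sum>\<beta>=1..n'. \<rho>' \<beta> * (cmod (poly p (cis (\<phi>' \<beta>))))\<^sup>2)"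
    using r by (simp add: toeplitz_form_rep[OF rep'] poisson_form_1_poly)
  hence "(\<Sum>\<beta>=1..n'. \<rho>' \<beta> * (cmod (poly p (cis (\<phi>' \<beta>))))\<^sup>2) = 0"
    using toeplitz_form_node_poly[OF rep r] unfolding p_def by (metis of_real_eq_0_iff)
  hence "\<rho>' \<beta> * (cmod (poly p (cis (\<phi>' \<beta>))))\<^sup>2 = 0"
    using circle_rep_basic(3)[OF rep'] \<beta> by (subst (asm) sum_nonneg_eq_0_iff) (auto simp: less_imp_le)
  thus ?thesis using circle_rep_basic(3)[OF rep' \<beta>] by (simp add: p_def)
qed

lemma sum_rep_poly:
  assumes rep: "circle_rep N \<nu> r n \<rho> \<phi>" and r: "0 < r" and q: "degree q \<le> N"
  shows "(\<Sum>\<alpha>=1..n. of_real (\<rho> \<alpha>) * poly q (cis (\<phi> \<alpha>))) = (\<Sum>j\<le>N. coeff q j * scaled_moment \<nu> r (int j))"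
proof -
  have "(\<Sum>j\<le>N. coeff q j * scaled_moment \<nu> r (int j)) =
        (\<Sum>j\<le>N. \<Sum>\<alpha>=1..n. of_real (\<rho> \<alpha>) * (coeff q j * cis (\<phi> \<alpha>) ^ j))"
    using r by (intro sum.cong refl) (simp add: scaled_moment_rep[OF rep] sum_distrib_left mult_ac)
  also have "\<dots> = (\<Sum>\<alpha>=1..n. of_real (\<rho> \<alpha>) * poly q (cis (\<phi> \<alpha>)))"
    by (subst sum.swap) (simp add: poly_altdef_le[OF q] sum_distrib_left)
  finally show ?thesis by simp
qed

text \<open>Both representations are supported on the zeros of \<open>node_poly n \<phi>\<close>, where \<open>z ^ k\<close>
  agrees with its remainder modulo that polynomial, which has degree below \<open>n \<le> N\<close>.\<close>

lemma ansatz_coeff_unique: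
  assumes rep: "circle_rep N \<nu> r n \<rho> \<phi>" and rep': "circle_rep N \<nu> r n' \<rho>' \<phi>'" and r: "0 \<le> r"
  shows "ansatz_coeff r n \<rho> \<phi> k = ansatz_coeff r n' \<rho>' \<phi>' k"
proof (cases "r = 0 \<and> k \<noteq> 0")
  case False
  hence "r > 0 \<or> k = 0" using r by auto
  thus ?thesis
  proof
    assume "k = 0" thus ?thesis using rep rep' by (auto simp: circle_rep_def)
  next
    assume r: "r > 0"
    define p where "p = node_poly n \<phi>"
    have "p \<noteq> 0" using coeff_node_poly_top[of n \<phi>] by (auto simp: p_def)
    define q where "q = monom 1 k mod p"
    have q: "degree q \<le> N"
      using degree_mod_less[OF \<open>p \<noteq> 0\<close>, of "monom 1 k"] circle_rep_basic(2)[OF rep]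
      by (auto simp: q_def p_def degree_node_poly)
    have "z ^ k = poly q z" if "poly p z = 0" for z
      using that by (simp add: q_def poly_mod_root poly_monom)
    hence "(\<Sum>\<alpha>=1..n. of_real (\<rho> \<alpha>) * cis (\<phi> \<alpha>) ^ k) = (\<Sum>\<alpha>=1..n. of_real (\<rho> \<alpha>) * poly q (cis (\<phi> \<alpha>)))"
      and "(\<Sum>\<alpha>=1..n'. of_real (\<rho>' \<alpha>) * cis (\<phi>' \<alpha>) ^ k) = (\<Sum>\<alpha>=1..n'. of_real (\<rho>' \<alpha>) * poly q (cis (\<phi>' \<alpha>)))"
      using poly_node_poly_node poly_node_poly_other_rep[OF rep rep' r] by (auto simp: p_def intro!: sum.cong)
    thus ?thesis unfolding ansatz_coeff_cis using sum_rep_poly[OF rep r q] sum_rep_poly[OF rep' r q] by simp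
  qed
qed (simp add: ansatz_coeff_def)

section \<open>Positive semidefiniteness under perturbation\<close>

lemma toeplitz_form_cong: "(\<And>j. j \<le> N \<Longrightarrow> d j = e j) \<Longrightarrow> toeplitz_form c N d d = toeplitz_form c N e e"
  unfolding toeplitz_form_def by (intro sum.cong refl) auto

lemma toeplitz_form_scale: "toeplitz_form c N (\<lambda>j. a * d j) (\<lambda>j. a * d j) = cnj a * a * toeplitz_form c N d d"
  unfolding toeplitz_form_def by (simp add: sum_distrib_left mult_ac)

lemma toeplitz_form_perturb:
  assumes M: "\<And>j. j \<le> N \<Longrightarrow> cmod (d j) \<le> M"
  shows "cmod (toeplitz_form c N d d - toeplitz_form c' N d d)
    \<le> real ((N + 1)\<^sup>2) * M\<^sup>2 * (\<Sum>k\<in>{-int N..int N}. cmod (c k - c' k))"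
proof -
  define D where "D = (\<Sum>k\<in>{-int N..int N}. cmod (c k - c' k))"
  have M0: "0 \<le> M" using M[of 0] by (meson norm_ge_zero order.trans le0)
  have "toeplitz_form c N d d - toeplitz_form c' N d d =
      (\<Sum>i\<le>N. \<Sum>j\<le>N. cnj (d i) * d j * (c (int j - int i) - c' (int j - int i)))"
    unfolding toeplitz_form_def by (simp add: sum_subtractf algebra_simps)
  also have "cmod \<dots> \<le> (\<Sum>i\<le>N. \<Sum>j\<le>N. cmod (cnj (d i) * d j * (c (int j - int i) - c' (int j - int i))))"
    by (rule order.trans[OF norm_sum sum_mono[OF norm_sum]])
  also have "\<dots> \<le> (\<Sum>i\<le>N. \<Sum>j\<le>N. M * M * D)"
  proof (intro sum_mono)
    fix i j assume ij: "i \<in> {..N}" "j \<in> {..N}"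
    have "cmod (c (int j - int i) - c' (int j - int i)) \<le> D"
      unfolding D_def using ij by (intro member_le_sum) auto
    thus "cmod (cnj (d i) * d j * (c (int j - int i) - c' (int j - int i))) \<le> M * M * D"
      using M ij unfolding norm_mult complex_mod_cnj by (intro mult_mono) (auto intro: mult_mono M0)
  qed
  also have "\<dots> = real ((N + 1)\<^sup>2) * M\<^sup>2 * D" by (simp add: power2_eq_square algebra_simps)
  finally show ?thesis by (simp add: D_def)
qed

lemma toeplitz_form_min_sup_norm_1:
  obtains d0 where "\<exists>j\<le>N. cmod (d0 j) = 1"
    "\<And>d j0. (\<And>j. j \<le> N \<Longrightarrow> cmod (d j) \<le> 1) \<Longrightarrow> (\<And>j. N < j \<Longrightarrow> d j = 0) \<Longrightarrow> j0 \<le> N \<Longrightarrow>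
      cmod (d j0) = 1 \<Longrightarrow> Re (toeplitz_form c N d0 d0) \<le> Re (toeplitz_form c N d d)"
proof -
  define S where "S j = (if j \<le> N then cball 0 1 else {0::complex})" for j
  define K where "K = Pi UNIV S \<inter> (\<Union>j\<in>{..N}. (\<lambda>d. d j) -` sphere 0 1)"
  have "compactin (product_topology (\<lambda>i. euclidean) UNIV) (Pi\<^sub>E UNIV S)"
    by (subst compactin_PiE) (auto simp: S_def)
  hence cP: "compact (Pi UNIV S)" by (simp add: euclidean_product_topology PiE_UNIV_domain)
  have coord: "continuous (at x) (\<lambda>d::nat \<Rightarrow> complex. d j)" for x j
    using continuous_on_eq_continuous_at[of UNIV "\<lambda>d::nat \<Rightarrow> complex. d j"] by simp
  have cK: "compact K" unfolding K_def
    by (intro compact_Int_closed cP closed_UN) (auto intro!: continuous_closed_vimage coord)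
  have cF: "continuous_on K (\<lambda>d. Re (toeplitz_form c N d d))" unfolding toeplitz_form_def
    by (intro continuous_intros continuous_on_subset[OF continuous_on_product_coordinates]) auto
  have "(\<lambda>j. if j = 0 then 1 else 0) \<in> K" unfolding K_def S_def by auto
  then obtain d0 where d0: "d0 \<in> K"
    and min: "\<And>d. d \<in> K \<Longrightarrow> Re (toeplitz_form c N d0 d0) \<le> Re (toeplitz_form c N d d)"
    using continuous_attains_inf[OF cK _ cF] by blast
  have "d \<in> K" if "\<And>j. j \<le> N \<Longrightarrow> cmod (d j) \<le> 1" "\<And>j. N < j \<Longrightarrow> d j = 0" "j0 \<le> N" "cmod (d j0) = 1"
    for d j0
    using that unfolding K_def S_def by (auto simp: not_le)
  moreover have "\<exists>j\<le>N. cmod (d0 j) = 1" using d0 unfolding K_def by auto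
  ultimately show ?thesis using that min by blast
qed

lemma toeplitz_form_coercive:
  assumes pd: "\<And>d. (\<exists>j\<le>N. d j \<noteq> 0) \<Longrightarrow> Re (toeplitz_form c N d d) > 0"
  obtains lam where "lam > 0" "\<And>d. lam * (Max ((\<lambda>j. cmod (d j)) ` {..N}))\<^sup>2 \<le> Re (toeplitz_form c N d d)"
proof -
  obtain d0 where d0: "\<exists>j\<le>N. cmod (d0 j) = 1"
    and min: "\<And>d j0. (\<And>j. j \<le> N \<Longrightarrow> cmod (d j) \<le> 1) \<Longrightarrow> (\<And>j. N < j \<Longrightarrow> d j = 0) \<Longrightarrow> j0 \<le> N \<Longrightarrow>
      cmod (d j0) = 1 \<Longrightarrow> Re (toeplitz_form c N d0 d0) \<le> Re (toeplitz_form c N d d)"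
    using toeplitz_form_min_sup_norm_1 by blast
  define lam where "lam = Re (toeplitz_form c N d0 d0)"
  have "lam > 0" unfolding lam_def using d0 by (intro pd) auto
  moreover have "lam * M\<^sup>2 \<le> Re (toeplitz_form c N d d)" if M: "M = Max ((\<lambda>j. cmod (d j)) ` {..N})" for d M
  proof (cases "\<exists>j\<le>N. d j \<noteq> 0")
    case False
    hence "toeplitz_form c N d d = 0" by (simp add: toeplitz_form_def)
    moreover have "M = 0" using False unfolding M by (auto intro!: Max_eqI)
    ultimately show ?thesis by simp
  next
    case True
    have "M \<in> (\<lambda>j. cmod (d j)) ` {..N}" unfolding M by (intro Max_in) auto
    then obtain j0 where j0: "j0 \<le> N" "cmod (d j0) = M" by auto
    have Mge: "cmod (d j) \<le> M" if "j \<le> N" for j unfolding M using that by (intro Max_ge) auto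
    from True obtain j1 where "j1 \<le> N" "d j1 \<noteq> 0" by auto
    hence Mpos: "M > 0" using Mge[of j1] by (metis norm_le_zero_iff not_le order.trans)
    define d' where "d' j = (if j \<le> N then d j / of_real M else 0)" for j
    have "lam \<le> Re (toeplitz_form c N d' d')" unfolding lam_def
      by (rule min[of d' j0]) (use Mge Mpos j0 in \<open>auto simp: d'_def norm_divide divide_le_eq_1\<close>)
    also have "toeplitz_form c N d' d' = toeplitz_form c N (\<lambda>j. (1 / of_real M) * d j) (\<lambda>j. (1 / of_real M) * d j)"
      by (intro toeplitz_form_cong) (simp add: d'_def)
    also have "Re \<dots> = Re (toeplitz_form c N d d) / M\<^sup>2"
      unfolding toeplitz_form_scale by (simp add: power2_eq_square)
    finally show ?thesis using Mpos by (simp add: field_simps)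
  qed
  ultimately show ?thesis using that by blast
qed

lemma toeplitz_psd_near_pd:
  fixes c :: "real \<Rightarrow> int \<Rightarrow> complex"
  assumes cont: "\<And>k. isCont (\<lambda>r. c r k) r0"
    and pd: "\<And>d. (\<exists>j\<le>N. d j \<noteq> 0) \<Longrightarrow> Re (toeplitz_form (c r0) N d d) > 0"
  obtains \<eta> where "\<eta> > 0" "\<And>r. \<bar>r - r0\<bar> < \<eta> \<Longrightarrow> toeplitz_psd (c r) N"
proof -
  obtain lam where lam: "lam > 0" "\<And>d. lam * (Max ((\<lambda>j. cmod (d j)) ` {..N}))\<^sup>2 \<le> Re (toeplitz_form (c r0) N d d)"
    using toeplitz_form_coercive[OF pd] by blast
  define D where "D r = (\<Sum>k\<in>{-int N..int N}. cmod (c r k - c r0 k))" for r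
  have "isCont D r0" unfolding D_def by (intro continuous_intros cont)
  moreover have "D r0 = 0" by (simp add: D_def)
  moreover have "lam / real ((N + 1)\<^sup>2) > 0" using lam(1) by simp
  ultimately obtain \<eta> where \<eta>: "\<eta> > 0" "\<And>r. dist r r0 < \<eta> \<Longrightarrow> dist (D r) (D r0) < lam / real ((N + 1)\<^sup>2)"
    unfolding continuous_at_eps_delta by metis
  have "toeplitz_psd (c r) N" if r: "\<bar>r - r0\<bar> < \<eta>" for r
    unfolding toeplitz_psd_def
  proof
    fix d
    define M where "M = Max ((\<lambda>j. cmod (d j)) ` {..N})"
    have "cmod (d j) \<le> M" if "j \<le> N" for j unfolding M_def using that by (intro Max_ge) auto
    hence "Re (toeplitz_form (c r0) N d d) - Re (toeplitz_form (c r) N d d) \<le> real ((N + 1)\<^sup>2) * M\<^sup>2 * D r"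
      using toeplitz_form_perturb[of N d M "c r" "c r0"] abs_Re_le_cmod[of "toeplitz_form (c r) N d d - toeplitz_form (c r0) N d d"]
      unfolding D_def by simp
    also have "\<dots> \<le> real ((N + 1)\<^sup>2) * M\<^sup>2 * (lam / real ((N + 1)\<^sup>2))"
      using \<eta>(2)[of r] r \<open>D r0 = 0\<close> by (intro mult_left_mono) (auto simp: dist_real_def)
    also have "\<dots> = lam * M\<^sup>2" by simp
    finally show "0 \<le> Re (toeplitz_form (c r) N d d)" using lam(2)[of d] by (simp add: M_def)
  qed
  thus ?thesis using that \<eta>(1) by blast
qed

lemma toeplitz_psd_Inf:
  fixes c :: "real \<Rightarrow> int \<Rightarrow> complex"
  assumes R: "R \<noteq> {}" "bdd_below R" and psd: "\<And>r. r \<in> R \<Longrightarrow> toeplitz_psd (c r) N"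
    and cont: "\<And>k. isCont (\<lambda>r. c r k) (Inf R)"
  shows "toeplitz_psd (c (Inf R)) N"
  unfolding toeplitz_psd_def
proof (rule allI, rule ccontr)
  fix d assume "\<not> 0 \<le> Re (toeplitz_form (c (Inf R)) N d d)"
  define g where "g r = Re (toeplitz_form (c r) N d d)" for r
  have "isCont g (Inf R)" unfolding g_def toeplitz_form_def by (rule isCont_Re, intro continuous_intros cont)
  moreover have "- g (Inf R) > 0" using \<open>\<not> 0 \<le> _\<close> by (simp add: g_def)
  ultimately obtain \<eta> where \<eta>: "\<eta> > 0" "\<And>r. dist r (Inf R) < \<eta> \<Longrightarrow> dist (g r) (g (Inf R)) < - g (Inf R)"
    unfolding continuous_at_eps_delta by metis
  obtain r where r: "r \<in> R" "r < Inf R + \<eta>" using cInf_less_iff[OF R, of "Inf R + \<eta>"] \<eta>(1) by auto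
  have "dist r (Inf R) < \<eta>" using cInf_lower[OF r(1) R(2)] r(2) by (simp add: dist_real_def)
  hence "g r < 0" using \<eta>(2)[of r] by (simp add: dist_real_def)
  moreover have "g r \<ge> 0" using psd[OF r(1)] by (simp add: toeplitz_psd_def g_def)
  ultimately show False by simp
qed

lemma toeplitz_psd_least_radius:
  fixes c :: "real \<Rightarrow> int \<Rightarrow> complex"
  assumes psd1: "toeplitz_psd (c 1) N" and \<delta>: "0 < \<delta>"
    and lower: "\<And>r. 0 < r \<Longrightarrow> r \<le> 1 \<Longrightarrow> toeplitz_psd (c r) N \<Longrightarrow> \<delta> \<le> r"
    and cont: "\<And>r k. 0 < r \<Longrightarrow> isCont (\<lambda>r. c r k) r"
  obtains r0 where "0 < r0" "r0 \<le> 1" "toeplitz_psd (c r0) N"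
    "\<And>r. 0 < r \<Longrightarrow> r < r0 \<Longrightarrow> \<not> toeplitz_psd (c r) N"
proof -
  define R where "R = {r. 0 < r \<and> r \<le> 1 \<and> toeplitz_psd (c r) N}"
  have "1 \<in> R" using psd1 by (simp add: R_def)
  hence R: "R \<noteq> {}" "bdd_below R" using lower by (auto simp: R_def bdd_below_def)
  have "\<delta> \<le> Inf R" using lower by (intro cInf_greatest[OF R(1)]) (auto simp: R_def)
  hence pos: "0 < Inf R" using \<delta> by linarith
  have le1: "Inf R \<le> 1" by (rule cInf_lower[OF \<open>1 \<in> R\<close> R(2)])
  have "toeplitz_psd (c (Inf R)) N"
    by (rule toeplitz_psd_Inf[OF R _ cont[OF pos]]) (simp add: R_def)
  moreover have "\<not> toeplitz_psd (c r) N" if r: "0 < r" "r < Inf R" for r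
  proof
    assume "toeplitz_psd (c r) N"
    hence "r \<in> R" using r le1 by (simp add: R_def)
    hence "Inf R \<le> r" using R(2) by (rule cInf_lower)
    thus False using r by simp
  qed
  ultimately show ?thesis using that pos le1 by blast
qed

lemma toeplitz_form_pos_or_singular:
  assumes h: "hermitian_seq c" and psd: "toeplitz_psd c N" and d: "\<exists>j\<le>N. d j \<noteq> 0"
  shows "Re (toeplitz_form c N d d) > 0 \<or> (\<exists>p. p \<noteq> 0 \<and> degree p \<le> N \<and> poly_form c N p p = 0)"
proof -
  define p where "p = Poly (map d [0..<Suc N])"
  have coeff: "coeff p j = d j" if "j \<le> N" for j
    using that by (simp add: p_def nth_default_def del: upt_Suc)
  have "degree p \<le> N" by (rule degree_le) (auto simp: p_def nth_default_def simp del: upt_Suc)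
  moreover have "p \<noteq> 0" using d coeff by (metis coeff_0)
  moreover have "toeplitz_form c N d d = poly_form c N p p"
    unfolding poly_form_def by (intro toeplitz_form_cong) (simp add: coeff)
  moreover have "Im (poly_form c N p p) = 0" "0 \<le> Re (poly_form c N p p)"
    using poly_form_real[OF h] toeplitz_psd_poly_form[OF psd] by auto
  ultimately show ?thesis by (auto simp: complex_eq_iff less_le)
qed

lemma toeplitz_singular_at_threshold:
  fixes c :: "real \<Rightarrow> int \<Rightarrow> complex"
  assumes r0: "0 < r0" and h: "hermitian_seq (c r0)" and psd: "toeplitz_psd (c r0) N"
    and cont: "\<And>k. isCont (\<lambda>r. c r k) r0"
    and below: "\<And>r. 0 < r \<Longrightarrow> r < r0 \<Longrightarrow> \<not> toeplitz_psd (c r) N"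
  shows "\<exists>p. p \<noteq> 0 \<and> degree p \<le> N \<and> poly_form (c r0) N p p = 0"
proof (rule ccontr)
  assume "\<not> ?thesis"
  hence pd: "Re (toeplitz_form (c r0) N d d) > 0" if "\<exists>j\<le>N. d j \<noteq> 0" for d
    using toeplitz_form_pos_or_singular[OF h psd that] by blast
  obtain \<eta> where \<eta>: "\<eta> > 0" "\<And>r. \<bar>r - r0\<bar> < \<eta> \<Longrightarrow> toeplitz_psd (c r) N"
    using toeplitz_psd_near_pd[OF cont pd] by metis
  define r where "r = r0 - min \<eta> r0 / 2"
  have "0 < r" "r < r0" "\<bar>r - r0\<bar> < \<eta>" using \<eta>(1) r0 by (auto simp: r_def min_def)
  thus False using below \<eta>(2) by blast
qed

section \<open>Existence\<close>

lemma space_circle_measure: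
  assumes "sets \<nu> = sets (restrict_space borel (sphere (0::complex) 1))"
  shows "space \<nu> = sphere 0 1"
  using sets_eq_imp_space_eq[OF assms] by (simp add: space_restrict_space)

lemma integrable_circle_measure:
  assumes sets: "sets \<nu> = sets (restrict_space borel (sphere (0::complex) 1))"
    and fin: "finite_measure \<nu>"
    and cont: "continuous_on UNIV f" and bnd: "\<And>z. cmod z = 1 \<Longrightarrow> cmod (f z) \<le> B"
  shows "integrable \<nu> (f :: complex \<Rightarrow> complex)"
proof -
  have "f \<in> borel_measurable (restrict_space borel (sphere 0 1))"
    by (rule measurable_restrict_space1[OF borel_measurable_continuous_onI[OF cont]])
  hence "f \<in> borel_measurable \<nu>" by (simp add: measurable_cong_sets[OF sets refl])
  moreover have "AE z in \<nu>. cmod (f z) \<le> B"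
    using space_circle_measure[OF sets] bnd by (intro AE_I2) auto
  ultimately show ?thesis using finite_measure.integrable_const_bound[OF fin] by blast
qed

lemma scaled_moment_1:
  assumes sets: "sets \<nu> = sets (restrict_space borel (sphere (0::complex) 1))"
  shows "scaled_moment \<nu> 1 (int j - int i) = (LINT z|\<nu>. cnj z ^ i * z ^ j)"
proof -
  have unit: "z \<in> space \<nu> \<Longrightarrow> cmod z = 1" for z using space_circle_measure[OF sets] by simp
  show ?thesis
  proof (cases "i \<le> j")
    case True
    have "scaled_moment \<nu> 1 (int j - int i) = (LINT z|\<nu>. z ^ (j - i))"
      using True by (simp add: scaled_moment_def circle_moment_def nat_diff_distrib')
    also have "\<dots> = (LINT z|\<nu>. cnj z ^ i * z ^ j)"
      using True unit cnj_power_mult_power_unit_cases by (intro Bochner_Integration.integral_cong) auto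
    finally show ?thesis .
  next
    case False
    have "scaled_moment \<nu> 1 (int j - int i) = cnj (LINT z|\<nu>. z ^ (i - j))"
      using False by (simp add: scaled_moment_def circle_moment_def nat_diff_distrib')
    also have "\<dots> = (LINT z|\<nu>. cnj z ^ (i - j))"
      by (simp flip: Bochner_Integration.integral_cnj)
    also have "\<dots> = (LINT z|\<nu>. cnj z ^ i * z ^ j)"
      using False unit cnj_power_mult_power_unit_cases by (intro Bochner_Integration.integral_cong) auto
    finally show ?thesis .
  qed
qed

lemma toeplitz_form_scaled_moment_1:
  assumes sets: "sets \<nu> = sets (restrict_space borel (sphere (0::complex) 1))"
    and fin: "finite_measure \<nu>"
  shows "toeplitz_form (scaled_moment \<nu> 1) N d d = of_real (LINT z|\<nu>. (cmod (\<Sum>j\<le>N. d j * z ^ j))\<^sup>2)"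
proof -
  have int: "integrable \<nu> (\<lambda>z. cnj (d i) * d j * (cnj z ^ i * z ^ j))" for i j
    by (rule integrable_circle_measure[OF sets fin, where B = "cmod (d i) * cmod (d j)"])
       (auto intro!: continuous_intros simp: norm_mult norm_power)
  have "toeplitz_form (scaled_moment \<nu> 1) N d d =
      (LINT z|\<nu>. (\<Sum>i\<le>N. \<Sum>j\<le>N. cnj (d i) * d j * (cnj z ^ i * z ^ j)))"
    unfolding toeplitz_form_def scaled_moment_1[OF sets]
    by (simp add: Bochner_Integration.integral_sum int integrable_sum)
  also have "\<dots> = (LINT z|\<nu>. of_real ((cmod (\<Sum>j\<le>N. d j * z ^ j))\<^sup>2))"
  proof (intro Bochner_Integration.integral_cong refl)
    fix z
    have "(\<Sum>i\<le>N. \<Sum>j\<le>N. cnj (d i) * d j * (cnj z ^ i * z ^ j)) =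
        cnj (\<Sum>j\<le>N. d j * z ^ j) * (\<Sum>j\<le>N. d j * z ^ j)"
      by (simp add: cnj_sum sum_distrib_left sum_distrib_right mult_ac)
    thus "(\<Sum>i\<le>N. \<Sum>j\<le>N. cnj (d i) * d j * (cnj z ^ i * z ^ j)) = of_real ((cmod (\<Sum>j\<le>N. d j * z ^ j))\<^sup>2)"
      using complex_norm_square[of "\<Sum>j\<le>N. d j * z ^ j"] by (simp only: mult.commute)
  qed
  also have "\<dots> = of_real (LINT z|\<nu>. (cmod (\<Sum>j\<le>N. d j * z ^ j))\<^sup>2)"
    by (rule integral_complex_of_real)
  finally show ?thesis .
qed

lemma toeplitz_psd_scaled_moment_1:
  assumes "sets \<nu> = sets (restrict_space borel (sphere (0::complex) 1))" "finite_measure \<nu>"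
  shows "toeplitz_psd (scaled_moment \<nu> 1) N"
  unfolding toeplitz_psd_def toeplitz_form_scaled_moment_1[OF assms] by simp

lemma isCont_scaled_moment: "0 < r \<Longrightarrow> isCont (\<lambda>r. scaled_moment \<nu> r k) r"
  unfolding scaled_moment_def by (intro continuous_intros) auto

text \<open>Test the form on \<open>x ^ k - u\<close>, where \<open>u\<close> is the phase of \<open>m\<^sub>k\<close>.\<close>

lemma circle_moment_le_psd:
  assumes psd: "toeplitz_psd (scaled_moment \<nu> r) N" and r: "0 < r" and k: "1 \<le> k" "k \<le> N"
  shows "cmod (circle_moment \<nu> k) \<le> measure \<nu> (space \<nu>) * r ^ k"
proof (cases "circle_moment \<nu> k = 0")
  case False
  define m where "m = circle_moment \<nu> k"
  define m0 where "m0 = measure \<nu> (space \<nu>)"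
  define u where "u = m / of_real (cmod m)"
  have u: "cnj u * u = 1" "cnj u * m = of_real (cmod m)" "u * cnj m = of_real (cmod m)"
    using False complex_norm_square[of m] by (auto simp: u_def m_def field_simps power2_eq_square)
  have c: "scaled_moment \<nu> r 0 = of_real m0" "scaled_moment \<nu> r (int k) = m / of_real (r ^ k)"
    "scaled_moment \<nu> r (- int k) = cnj m / of_real (r ^ k)"
    using k by (auto simp: scaled_moment_def m_def m0_def circle_moment_0)
  have "poly_form (scaled_moment \<nu> r) N (monom (- u) 0 + monom 1 k) (monom (- u) 0 + monom 1 k)
      = of_real (2 * m0 - 2 * cmod m / r ^ k)"
    using k u by (simp add: poly_form_add_left poly_form_add_right poly_form_monom c field_simps)
  hence "0 \<le> 2 * m0 - 2 * cmod m / r ^ k" using toeplitz_psd_poly_form[OF psd] by (metis Re_complex_of_real)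
  thus ?thesis using r by (simp add: m_def m0_def field_simps)
qed (use r in simp)

lemma circle_rep_radius_0:
  assumes N: "1 \<le> N" and m0: "0 < measure \<nu> (space \<nu>)"
    and vanish: "\<And>k. k \<in> {1..N} \<Longrightarrow> circle_moment \<nu> k = 0"
  shows "circle_rep N \<nu> 0 1 (\<lambda>_. measure \<nu> (space \<nu>)) (\<lambda>_. 0)"
  unfolding circle_rep_def ansatz_coeff_def
proof (intro conjI ballI allI impI)
  fix k assume "k \<le> N"
  thus "circle_moment \<nu> k = of_real (0 ^ k) *
      (\<Sum>\<alpha>=1..(1::nat). of_real (measure \<nu> (space \<nu>)) * exp (\<i> * of_nat k * of_real 0))"
    using vanish by (cases "k = 0") (simp_all add: circle_moment_0)
qed (use N m0 in auto)

lemma unit_complex_eq_cis: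
  assumes "cmod z = 1"
  shows "\<exists>\<phi>. \<phi> \<in> {-pi..<pi} \<and> cis \<phi> = z"
proof -
  have "z \<noteq> 0" using assms by auto
  hence z: "cis (Arg z) = z" using assms cis_Arg[of z] by (simp add: sgn_div_norm)
  have "- pi < Arg z" "Arg z \<le> pi" by (rule mpi_less_Arg, rule Arg_le_pi)
  show ?thesis
  proof (cases "Arg z = pi")
    case True
    hence "cis (- pi) = z" using z by (simp add: cis.ctr)
    thus ?thesis by (intro exI[of _ "- pi"]) auto
  qed (use z \<open>- pi < Arg z\<close> \<open>Arg z \<le> pi\<close> in \<open>intro exI[of _ "Arg z"], auto\<close>)
qed

lemma circle_rep_of_atomic:
  assumes r: "0 < r" and S: "finite S" "S \<noteq> {}" "card S \<le> N"
    and node: "\<And>\<beta>. \<beta> \<in> S \<Longrightarrow> cmod \<beta> = 1 \<and> \<rho> \<beta> > 0"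
    and mom: "\<And>k. k \<le> N \<Longrightarrow> scaled_moment \<nu> r (int k) = (\<Sum>\<beta>\<in>S. of_real (\<rho> \<beta>) * \<beta> ^ k)"
  shows "\<exists>n \<rho> \<phi>. circle_rep N \<nu> r n \<rho> \<phi>"
proof -
  obtain h where h: "bij_betw h {1..card S} S" using ex_bij_betw_nat_finite_1[OF S(1)] by blast
  define \<phi> where "\<phi> \<alpha> = (SOME \<phi>. \<phi> \<in> {-pi..<pi} \<and> cis \<phi> = h \<alpha>)" for \<alpha>
  have hS: "h \<alpha> \<in> S" if "\<alpha> \<in> {1..card S}" for \<alpha> using h that by (rule bij_betw_apply)
  have \<phi>: "\<phi> \<alpha> \<in> {-pi..<pi} \<and> cis (\<phi> \<alpha>) = h \<alpha>" if "\<alpha> \<in> {1..card S}" for \<alpha>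
    using someI_ex[OF unit_complex_eq_cis[of "h \<alpha>"]] node[OF hS[OF that]] unfolding \<phi>_def by blast
  have "circle_rep N \<nu> r (card S) (\<rho> \<circ> h) \<phi>"
    unfolding circle_rep_def
  proof (intro conjI ballI allI impI)
    show "1 \<le> card S" using S(1,2) by (simp add: Suc_le_eq card_gt_0_iff)
    show "card S \<le> N" by (rule S(3))
    fix \<alpha> assume "\<alpha> \<in> {1..card S}"
    thus "(\<rho> \<circ> h) \<alpha> > 0" "\<phi> \<alpha> \<in> {-pi..<pi}" using node hS \<phi> by auto
  next
    fix k assume k: "k \<le> N"
    have "circle_moment \<nu> k = of_real (r ^ k) * scaled_moment \<nu> r (int k)"
      using r by (simp add: scaled_moment_def)
    also have "scaled_moment \<nu> r (int k) = (\<Sum>\<alpha>\<in>{1..card S}. of_real (\<rho> (h \<alpha>)) * h \<alpha> ^ k)"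
      unfolding mom[OF k] by (rule sum.reindex_bij_betw[OF h, symmetric])
    also have "\<dots> = (\<Sum>\<alpha>=1..card S. of_real ((\<rho> \<circ> h) \<alpha>) * cis (\<phi> \<alpha>) ^ k)"
      using \<phi> by (intro sum.cong) auto
    finally show "circle_moment \<nu> k = ansatz_coeff r (card S) (\<rho> \<circ> h) \<phi> k"
      unfolding ansatz_coeff_cis .
  qed
  thus ?thesis by blast
qed

lemma circle_rep_pos_radius:
  assumes sets: "sets \<nu> = sets (restrict_space borel (sphere (0::complex) 1))"
    and fin: "finite_measure \<nu>" and pos: "0 < measure \<nu> (space \<nu>)"
    and k: "1 \<le> k" "k \<le> N" "circle_moment \<nu> k \<noteq> 0"
  shows "\<exists>r\<in>{0<..1}. \<exists>n \<rho> \<phi>. circle_rep N \<nu> r n \<rho> \<phi>"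
proof -
  define m0 where "m0 = measure \<nu> (space \<nu>)"
  have lower: "cmod (circle_moment \<nu> k) / m0 \<le> r"
    if r: "0 < r" "r \<le> 1" "toeplitz_psd (scaled_moment \<nu> r) N" for r
  proof -
    have "cmod (circle_moment \<nu> k) \<le> m0 * r ^ k"
      using circle_moment_le_psd[OF r(3) r(1) k(1,2)] by (simp add: m0_def)
    also have "\<dots> \<le> m0 * r" using power_decreasing[of 1 k r] r k pos by (intro mult_left_mono) (auto simp: m0_def)
    finally show ?thesis using pos by (simp add: divide_le_eq mult.commute m0_def)
  qed
  obtain r0 where r0: "0 < r0" "r0 \<le> 1" and psd: "toeplitz_psd (scaled_moment \<nu> r0) N"
    and below: "\<And>r. 0 < r \<Longrightarrow> r < r0 \<Longrightarrow> \<not> toeplitz_psd (scaled_moment \<nu> r) N"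
    using toeplitz_psd_least_radius[OF toeplitz_psd_scaled_moment_1[OF sets fin] _ lower isCont_scaled_moment]
      k(3) pos by (auto simp: m0_def)
  obtain p where "p \<noteq> 0" "degree p \<le> N" "poly_form (scaled_moment \<nu> r0) N p p = 0"
    using toeplitz_singular_at_threshold[OF r0(1) hermitian_scaled_moment psd isCont_scaled_moment[OF r0(1)] below]
    by blast
  moreover have "scaled_moment \<nu> r0 0 \<noteq> 0" using pos by (simp add: scaled_moment_def circle_moment_0)
  ultimately obtain S \<rho> where "finite S" "S \<noteq> {}" "card S \<le> N" "\<And>\<beta>. \<beta> \<in> S \<Longrightarrow> cmod \<beta> = 1 \<and> \<rho> \<beta> > 0"
      "\<And>k. k \<le> N \<Longrightarrow> scaled_moment \<nu> r0 (int k) = (\<Sum>\<beta>\<in>S. of_real (\<rho> \<beta>) * \<beta> ^ k)"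
    using psd_singular_toeplitz_atomic[OF hermitian_scaled_moment psd] by blast
  hence "\<exists>n \<rho> \<phi>. circle_rep N \<nu> r0 n \<rho> \<phi>" by (rule circle_rep_of_atomic[OF r0(1)])
  thus ?thesis using r0 by (intro bexI[of _ r0]) auto
qed

lemma exists_circle_rep:
  assumes N: "1 \<le> N"
    and sets: "sets \<nu> = sets (restrict_space borel (sphere (0::complex) 1))"
    and fin: "finite_measure \<nu>" and nz: "emeasure \<nu> (space \<nu>) \<noteq> 0"
  shows "\<exists>r\<in>{0..1}. \<exists>n \<rho> \<phi>. circle_rep N \<nu> r n \<rho> \<phi>"
proof -
  have "measure \<nu> (space \<nu>) \<noteq> 0" using nz finite_measure.emeasure_eq_measure[OF fin] by auto
  hence m0: "0 < measure \<nu> (space \<nu>)" using measure_nonneg[of \<nu> "space \<nu>"] by linarith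
  show ?thesis
  proof (cases "\<forall>k\<in>{1..N}. circle_moment \<nu> k = 0")
    case True
    thus ?thesis using circle_rep_radius_0[OF N m0] by (intro bexI[of _ 0]) auto
  next
    case False
    then obtain k where "1 \<le> k" "k \<le> N" "circle_moment \<nu> k \<noteq> 0" by auto
    thus ?thesis using circle_rep_pos_radius[OF sets fin m0] by fastforce
  qed
qed

theorem theorem2p1:
  fixes N :: nat and \<nu> :: "complex measure"
  assumes "N \<ge> 1"
    and "sets \<nu> = sets (restrict_space borel (sphere (0::complex) 1))"
    and "finite_measure \<nu>"
    and "emeasure \<nu> (space \<nu>) \<noteq> 0"
  shows "(\<exists>!r. r \<in> {0..1} \<and> (\<exists>n \<rho> \<phi>. circle_rep N \<nu> r n \<rho> \<phi>)) \<and>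
         (\<forall>r n \<rho> \<phi> n' \<rho>' \<phi>'. r \<in> {0..1} \<longrightarrow> circle_rep N \<nu> r n \<rho> \<phi> \<longrightarrow>
           circle_rep N \<nu> r n' \<rho>' \<phi>' \<longrightarrow>
           (\<forall>k. ansatz_coeff r n \<rho> \<phi> k = ansatz_coeff r n' \<rho>' \<phi>' k))"
proof (intro conjI allI impI)
  obtain r0 n0 \<rho>0 \<phi>0 where r0: "r0 \<in> {0..1}" "circle_rep N \<nu> r0 n0 \<rho>0 \<phi>0"
    using exists_circle_rep[OF assms] by blast
  have "r = r0" if "r \<in> {0..1}" "circle_rep N \<nu> r n \<rho> \<phi>" for r n \<rho> \<phi>
    using circle_rep_radius_le[OF that(2) r0(2)] circle_rep_radius_le[OF r0(2) that(2)] that(1) r0(1)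
    by fastforce
  thus "\<exists>!r. r \<in> {0..1} \<and> (\<exists>n \<rho> \<phi>. circle_rep N \<nu> r n \<rho> \<phi>)" using r0 by blast
next
  fix r n \<rho> \<phi> n' \<rho>' \<phi>' k
  assume "r \<in> {0..1::real}" "circle_rep N \<nu> r n \<rho> \<phi>" "circle_rep N \<nu> r n' \<rho>' \<phi>'"
  thus "ansatz_coeff r n \<rho> \<phi> k = ansatz_coeff r n' \<rho>' \<phi>' k" by (intro ansatz_coeff_unique) auto
qed

end
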